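(* Let $G$ be a finite group, $k$ a field of characteristic $p$ dividing $|G|$. The constant presheaf $\underline{k^{\times}}$ on $\mathcal{O}(G)$ is a sheaf on the site $(\mathcal{O}(G),\mathcal{J}_{\rm sipp})$.
   Context: $\mathcal{O}(G)$ is the category of orbits $G/H$ ($H\le G$) and $G$-maps. $k^\times$ is the multiplicative group of $k$, and $\underline{k^\times}$ the constant presheaf with all restriction maps the identity. A sieve on $x$ is a set of morphisms with codomain $x$ closed under precomposition. $\mathcal{J}_{\rm sipp}$: a sieve on $G/H$ is covering iff it contains the projection $G/P_H\to G/H$, $gP_H\mapsto gH$, for a Sylow $p$-subgroup $P_H$ of $H$. A presheaf $\mathfrak{F}$ is a sheaf if for every covering sieve $S$ on $x$ the restriction map $\mathrm{Nat}(\mathrm{Hom}(-,x),\mathfrak{F})\to\mathrm{Nat}(S,\mathfrak{F})$ is bijective. *)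

theory Defs
  imports "HOL-Algebra.Algebra" "HOL-Library.FuncSet" "HOL-Computational_Algebra.Primes"
begin

text \<open>An object G/H is represented by the subgroup H;
  its underlying G-set is the set of left cosets gH.\<close>

definition orb :: "('g, 'm) monoid_scheme \<Rightarrow> 'g set \<Rightarrow> 'g set set" where
  "orb G H = {g <#\<^bsub>G\<^esub> H | g. g \<in> carrier G}"

definition Gmap :: "('g, 'm) monoid_scheme \<Rightarrow> 'g set \<Rightarrow> 'g set \<Rightarrow> ('g set \<Rightarrow> 'g set) \<Rightarrow> bool" where
  "Gmap G H K phi \<longleftrightarrow> phi \<in> orb G H \<rightarrow>\<^sub>E orb G K \<and>
     (\<forall>g \<in> carrier G. \<forall>C \<in> orb G H. phi (g <#\<^bsub>G\<^esub> C) = g <#\<^bsub>G\<^esub> phi C)"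

type_synonym 'g omor = "'g set \<times> 'g set \<times> ('g set \<Rightarrow> 'g set)"

definition omor :: "('g, 'm) monoid_scheme \<Rightarrow> 'g omor set" where
  "omor G = {(H, K, phi). subgroup H G \<and> subgroup K G \<and> Gmap G H K phi}"

definition odom :: "'g omor \<Rightarrow> 'g set" where "odom m = fst m"
definition ocod :: "'g omor \<Rightarrow> 'g set" where "ocod m = fst (snd m)"

text \<open>ocomp G m h = m o h (first h, then m), assuming ocod h = odom m.\<close>
definition ocomp :: "('g, 'm) monoid_scheme \<Rightarrow> 'g omor \<Rightarrow> 'g omor \<Rightarrow> 'g omor" where
  "ocomp G m h = (odom h, ocod m, compose (orb G (odom h)) (snd (snd m)) (snd (snd h)))"

definition oid :: "('g, 'm) monoid_scheme \<Rightarrow> 'g set \<Rightarrow> 'g omor" where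
  "oid G H = (H, H, restrict id (orb G H))"

definition is_presheaf :: "('g, 'm) monoid_scheme \<Rightarrow> ('g set \<Rightarrow> 'b set) \<Rightarrow> ('g omor \<Rightarrow> 'b \<Rightarrow> 'b) \<Rightarrow> bool" where
  "is_presheaf G Fobj Fmor \<longleftrightarrow>
     (\<forall>m \<in> omor G. \<forall>a \<in> Fobj (ocod m). Fmor m a \<in> Fobj (odom m)) \<and>
     (\<forall>H. subgroup H G \<longrightarrow> (\<forall>a \<in> Fobj H. Fmor (oid G H) a = a)) \<and>
     (\<forall>m \<in> omor G. \<forall>h \<in> omor G. ocod h = odom m \<longrightarrow>
        (\<forall>a \<in> Fobj (ocod m). Fmor (ocomp G m h) a = Fmor h (Fmor m a)))"

definition is_sieve :: "('g, 'm) monoid_scheme \<Rightarrow> 'g set \<Rightarrow> 'g omor set \<Rightarrow> bool" where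
  "is_sieve G Y Sv \<longleftrightarrow> Sv \<subseteq> {m. m \<in> omor G \<and> ocod m = Y} \<and>
     (\<forall>m \<in> Sv. \<forall>h \<in> omor G. ocod h = odom m \<longrightarrow> ocomp G m h \<in> Sv)"

definition max_sieve :: "('g, 'm) monoid_scheme \<Rightarrow> 'g set \<Rightarrow> 'g omor set" where
  "max_sieve G Y = {m. m \<in> omor G \<and> ocod m = Y}"

text \<open>Natural transformations S => F, for S a sieve viewed as a subpresheaf of Hom(-,Y):
  a family alpha indexed by the elements of S, alpha m in F(dom m), natural.\<close>
definition nat_trans :: "('g, 'm) monoid_scheme \<Rightarrow> 'g omor set \<Rightarrow> ('g set \<Rightarrow> 'b set) \<Rightarrow> ('g omor \<Rightarrow> 'b \<Rightarrow> 'b)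
    \<Rightarrow> ('g omor \<Rightarrow> 'b) set" where
  "nat_trans G S Fobj Fmor = {alpha. alpha \<in> extensional S \<and>
     (\<forall>m \<in> S. alpha m \<in> Fobj (odom m)) \<and>
     (\<forall>m \<in> S. \<forall>h \<in> omor G. ocod h = odom m \<longrightarrow> alpha (ocomp G m h) = Fmor h (alpha m))}"

definition sylow_of :: "('g, 'm) monoid_scheme \<Rightarrow> nat \<Rightarrow> 'g set \<Rightarrow> 'g set \<Rightarrow> bool" where
  "sylow_of G p H P \<longleftrightarrow> subgroup P G \<and> P \<subseteq> H \<and> card P = p ^ multiplicity p (card H)"

definition proj :: "('g, 'm) monoid_scheme \<Rightarrow> 'g set \<Rightarrow> 'g set \<Rightarrow> 'g set \<Rightarrow> 'g set" where
  "proj G P H = (\<lambda>C \<in> orb G P. THE D. \<exists>g \<in> carrier G. C = g <#\<^bsub>G\<^esub> P \<and> D = g <#\<^bsub>G\<^esub> H)"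

definition sipp_covering :: "('g, 'm) monoid_scheme \<Rightarrow> nat \<Rightarrow> 'g set \<Rightarrow> 'g omor set \<Rightarrow> bool" where
  "sipp_covering G p H S \<longleftrightarrow> is_sieve G H S \<and>
     (\<exists>P. sylow_of G p H P \<and> (P, H, proj G P H) \<in> S)"

definition is_sheaf_sipp :: "('g, 'm) monoid_scheme \<Rightarrow> nat \<Rightarrow> ('g set \<Rightarrow> 'b set) \<Rightarrow> ('g omor \<Rightarrow> 'b \<Rightarrow> 'b) \<Rightarrow> bool" where
  "is_sheaf_sipp G p Fobj Fmor \<longleftrightarrow> is_presheaf G Fobj Fmor \<and>
     (\<forall>Y S. subgroup Y G \<longrightarrow> sipp_covering G p Y S \<longrightarrow>
        bij_betw (\<lambda>alpha. restrict alpha S) (nat_trans G (max_sieve G Y) Fobj Fmor) (nat_trans G S Fobj Fmor))"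

definition const_units_obj :: "'g set \<Rightarrow> 'k::field set" where
  "const_units_obj H = {x. x \<noteq> 0}"

definition const_units_mor :: "'g omor \<Rightarrow> 'k::field \<Rightarrow> 'k" where
  "const_units_mor m = id"

end

theory Submission
  imports Defs
begin

text \<open>The free orbit G/1 maps to every object of the orbit category, and every morphism
  m into G/Y, precomposed with a suitable map G/1 \<rightarrow> dom m, becomes the projection
  G/1 \<rightarrow> G/Y. So every nonempty sieve on G/Y contains this projection, and a natural
  transformation from a sieve into a constant presheaf with identity restrictions is
  constant, equal to its value at the projection. Hence restriction from the maximal sieve
  is bijective for every nonempty sieve. The covering sieves of J_sipp are nonempty;
  neither the Sylow condition nor the characteristic plays any further role.\<close>

definition coset_map :: "('g, 'm) monoid_scheme \<Rightarrow> 'g set \<Rightarrow> 'g \<Rightarrow> 'g set \<Rightarrow> 'g set" where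
  "coset_map G H a = (\<lambda>C \<in> orb G {\<one>\<^bsub>G\<^esub>}. C <#>\<^bsub>G\<^esub> (a <#\<^bsub>G\<^esub> H))"

definition free_proj :: "('g, 'm) monoid_scheme \<Rightarrow> 'g set \<Rightarrow> 'g omor" where
  "free_proj G Y = ({\<one>\<^bsub>G\<^esub>}, Y, coset_map G Y \<one>\<^bsub>G\<^esub>)"

context group
begin

lemma orb_trivial_subgroup: "orb G {\<one>} = (\<lambda>c. {c}) ` carrier G"
  unfolding orb_def l_coset_def by auto (metis r_one)

lemma l_coset_in_orb: "H \<subseteq> carrier G \<Longrightarrow> c \<in> carrier G \<Longrightarrow> c <# H \<in> orb G H"
  unfolding orb_def by blast

lemma coset_map_singleton:
  assumes "subgroup H G" "a \<in> carrier G" "c \<in> carrier G"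
  shows "coset_map G H a {c} = (c \<otimes> a) <# H"
proof -
  have "coset_map G H a {c} = c <# (a <# H)"
    using assms(3) by (simp add: coset_map_def orb_trivial_subgroup l_coset_eq_set_mult)
  also have "\<dots> = (c \<otimes> a) <# H"
    using lcos_m_assoc[OF subgroup.subset[OF assms(1)] assms(3) assms(2)] by simp
  finally show ?thesis .
qed

lemma coset_map_omor:
  assumes "subgroup H G" "a \<in> carrier G"
  shows "({\<one>}, H, coset_map G H a) \<in> omor G"
proof -
  have HG: "H \<subseteq> carrier G" using assms(1) subgroup.subset by blast
  have "coset_map G H a \<in> orb G {\<one>} \<rightarrow>\<^sub>E orb G H"
    using coset_map_singleton[OF assms] l_coset_in_orb[OF HG] assms(2)
    by (auto simp: orb_trivial_subgroup coset_map_def)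
  moreover have "coset_map G H a (g <# {c}) = g <# coset_map G H a {c}"
    if "g \<in> carrier G" "c \<in> carrier G" for g c
    using that coset_map_singleton[OF assms] HG assms(2)
    by (simp add: l_coset_def[of G g "{c}"] lcos_m_assoc m_assoc)
  ultimately show ?thesis
    using assms(1) triv_subgroup by (auto simp: omor_def Gmap_def orb_trivial_subgroup)
qed

lemma ocomp_omor:
  assumes "m \<in> omor G" "h \<in> omor G" "ocod h = odom m"
  shows "ocomp G m h \<in> omor G"
proof -
  obtain H K phi A psi where m: "m = (H, K, phi)" and h: "h = (A, H, psi)"
    using assms(3) by (cases m, cases h) (auto simp: ocod_def odom_def)
  have phi: "Gmap G H K phi" and psi: "Gmap G A H psi" and A: "subgroup A G"
    using assms(1,2) m h by (auto simp: omor_def)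
  have "Gmap G A K (compose (orb G A) phi psi)"
    unfolding Gmap_def
  proof (intro conjI ballI)
    show "compose (orb G A) phi psi \<in> orb G A \<rightarrow>\<^sub>E orb G K"
      using phi psi by (auto simp: Gmap_def compose_def)
  next
    fix g C assume g: "g \<in> carrier G" and C: "C \<in> orb G A"
    have "g <# C \<in> orb G A"
      using C g subgroup.subset[OF A] by (auto simp: orb_def lcos_m_assoc)
    moreover have "psi C \<in> orb G H" using psi C by (auto simp: Gmap_def)
    ultimately show "compose (orb G A) phi psi (g <# C) = g <# compose (orb G A) phi psi C"
      using phi psi g C by (simp add: compose_def Gmap_def)
  qed
  then show ?thesis using assms m h by (simp add: ocomp_def omor_def odom_def ocod_def)
qed

lemma ocomp_coset_map_eq_free_proj:
  assumes "(H, Y, phi) \<in> omor G"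
  shows "\<exists>a \<in> carrier G. ocomp G (H, Y, phi) ({\<one>}, H, coset_map G H a) = free_proj G Y"
proof -
  have H: "subgroup H G" and Y: "subgroup Y G" and phi: "Gmap G H Y phi"
    using assms by (auto simp: omor_def)
  have HG: "H \<subseteq> carrier G" and YG: "Y \<subseteq> carrier G" using H Y subgroup.subset by blast+
  have "H \<in> orb G H" using l_coset_in_orb[OF HG, of \<one>] HG by (simp add: lcos_mult_one)
  then have "phi H \<in> orb G Y" using phi by (auto simp: Gmap_def)
  then obtain b where b: "b \<in> carrier G" "phi H = b <# Y" by (auto simp: orb_def)
  have phi_coset: "phi (x <# H) = x <# (b <# Y)" if "x \<in> carrier G" for x
    using phi that \<open>H \<in> orb G H\<close> b by (auto simp: Gmap_def)
  have "phi (coset_map G H (inv b) {c}) = coset_map G Y \<one> {c}" if "c \<in> carrier G" for c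
    using that b YG coset_map_singleton[OF H] coset_map_singleton[OF Y] phi_coset
    by (simp add: lcos_m_assoc m_assoc)
  then have "compose (orb G {\<one>}) phi (coset_map G H (inv b)) = coset_map G Y \<one>"
    by (auto simp: fun_eq_iff compose_def coset_map_def orb_trivial_subgroup)
  then have "ocomp G (H, Y, phi) ({\<one>}, H, coset_map G H (inv b)) = free_proj G Y"
    by (simp add: ocomp_def odom_def ocod_def free_proj_def)
  then show ?thesis using b by blast
qed

lemma sieve_ocomp_eq_free_proj:
  assumes "is_sieve G Y T" "m \<in> T"
  obtains h where "h \<in> omor G" "ocod h = odom m" "ocomp G m h = free_proj G Y"
proof -
  obtain H phi where m: "m = (H, Y, phi)" and mG: "(H, Y, phi) \<in> omor G"
    using assms by (cases m) (auto simp: is_sieve_def ocod_def)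
  then obtain a where a: "a \<in> carrier G"
    and "ocomp G m ({\<one>}, H, coset_map G H a) = free_proj G Y"
    using ocomp_coset_map_eq_free_proj by blast
  moreover have "subgroup H G" using mG by (simp add: omor_def)
  then have "({\<one>}, H, coset_map G H a) \<in> omor G" using coset_map_omor a by blast
  ultimately show ?thesis using that m by (simp add: ocod_def odom_def)
qed

lemma free_proj_in_sieve:
  assumes "is_sieve G Y T" "m \<in> T"
  shows "free_proj G Y \<in> T"
proof -
  obtain h where "h \<in> omor G" "ocod h = odom m" "ocomp G m h = free_proj G Y"
    using sieve_ocomp_eq_free_proj[OF assms] .
  then show ?thesis using assms unfolding is_sieve_def by metis
qed

lemma nat_trans_const_eq_free_proj:
  assumes "is_sieve G Y T" "alpha \<in> nat_trans G T (\<lambda>_. A) (\<lambda>_. id)" "m \<in> T"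
  shows "alpha m = alpha (free_proj G Y)"
proof -
  obtain h where h: "h \<in> omor G" "ocod h = odom m" and "ocomp G m h = free_proj G Y"
    using sieve_ocomp_eq_free_proj[OF assms(1,3)] .
  moreover have "alpha (ocomp G m h) = alpha m"
    using h assms(2,3) by (simp add: nat_trans_def)
  ultimately show ?thesis by simp
qed

lemma max_sieve_is_sieve: "is_sieve G Y (max_sieve G Y)"
  using ocomp_omor by (auto simp: is_sieve_def max_sieve_def ocomp_def ocod_def)

lemma bij_restrict_nat_trans_const:
  assumes S: "is_sieve G Y S" "S \<noteq> {}"
  shows "bij_betw (\<lambda>alpha. restrict alpha S)
    (nat_trans G (max_sieve G Y) (\<lambda>_. A) (\<lambda>_. id)) (nat_trans G S (\<lambda>_. A) (\<lambda>_. id))"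
proof -
  let ?E = "free_proj G Y"
  let ?M = "max_sieve G Y"
  let ?extend = "\<lambda>beta. \<lambda>m \<in> ?M. beta ?E"
  have ES: "?E \<in> S" using S free_proj_in_sieve by blast
  have SM: "S \<subseteq> ?M" using S by (auto simp: is_sieve_def max_sieve_def)
  show ?thesis
  proof (rule bij_betw_byWitness[where f' = ?extend], safe)
    fix alpha assume alpha: "alpha \<in> nat_trans G ?M (\<lambda>_. A) (\<lambda>_. id)"
    show "?extend (restrict alpha S) = alpha"
    proof (rule extensionalityI[of _ ?M])
      show "alpha \<in> extensional ?M" using alpha by (simp add: nat_trans_def)
      show "?extend (restrict alpha S) m = alpha m" if "m \<in> ?M" for m
        using that ES nat_trans_const_eq_free_proj[OF max_sieve_is_sieve alpha] by simp
    qed (rule restrict_extensional)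
    show "restrict alpha S \<in> nat_trans G S (\<lambda>_. A) (\<lambda>_. id)"
      using alpha S(1) SM by (auto simp: nat_trans_def is_sieve_def)
  next
    fix beta assume beta: "beta \<in> nat_trans G S (\<lambda>_. A) (\<lambda>_. id)"
    show "restrict (?extend beta) S = beta"
    proof (rule extensionalityI[of _ S])
      show "beta \<in> extensional S" using beta by (simp add: nat_trans_def)
      show "restrict (?extend beta) S m = beta m" if "m \<in> S" for m
        using that SM nat_trans_const_eq_free_proj[OF S(1) beta] by auto
    qed (rule restrict_extensional)
    have "beta ?E \<in> A" using beta ES by (simp add: nat_trans_def)
    then show "?extend beta \<in> nat_trans G ?M (\<lambda>_. A) (\<lambda>_. id)"
      using max_sieve_is_sieve by (auto simp: nat_trans_def is_sieve_def)
  qed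
qed

end

theorem proposition4p2p1:
  fixes G :: "('g, 'm) monoid_scheme"
  assumes "group G" and "finite (carrier G)"
    and "CHAR('k::field) dvd order G"
  shows "is_sheaf_sipp G CHAR('k) (const_units_obj :: 'g set \<Rightarrow> 'k set) const_units_mor"
proof -
  interpret group G by fact
  have obj: "(const_units_obj :: 'g set \<Rightarrow> 'k set) = (\<lambda>_. {x. x \<noteq> 0})"
    by (simp add: fun_eq_iff const_units_obj_def)
  have mor: "(const_units_mor :: 'g omor \<Rightarrow> 'k \<Rightarrow> 'k) = (\<lambda>_. id)"
    by (simp add: fun_eq_iff const_units_mor_def)
  have "is_sieve G Y S \<and> S \<noteq> {}" if "sipp_covering G CHAR('k) Y S" for Y S
    using that by (auto simp: sipp_covering_def)
  then show ?thesis
    unfolding is_sheaf_sipp_def obj mor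
    by (auto simp: is_presheaf_def intro: bij_restrict_nat_trans_const)
qed

end
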